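(* Let $e\ge 2$ be fixed. For $n\ge 2$ let $c_{n,2e}=-\min_{x\in[-1,1]}Q_{n,2e}(x)$ and $b_{n,2e}=1+Q_{n,2e}(1)/c_{n,2e}$. Then there exist positive constants $A_{2e}$ and $B_{2e}$, depending only on $e$, such that \[\lim_{n\to\infty}\frac{c_{n,2e}}{n^e}=A_{2e}\quad\text{and}\quad\lim_{n\to\infty}\frac{b_{n,2e}}{n^e}=B_{2e}.\] Consequently $c_{n,2e}=A_{2e}n^e(1+o(1))$ and $b_{n,2e}=B_{2e}n^e(1+o(1))$ as $n\to\infty$.
   Context: $Q_{n,k}(x)$ denotes the Gegenbauer polynomial of degree $k$ associated with $\mathbb{S}^{n-1}\subseteq\mathbb{R}^n$: the $Q_{n,k}$ are orthogonal on $[-1,1]$ with respect to the weight $(1-x^2)^{(n-3)/2}$ and normalized so that $Q_{n,k}(1)=\binom{n+k-1}{n-1}-\binom{n+k-3}{n-1}$, the dimension of the space of real homogeneous harmonic polynomials of degree $k$ in $n$ variables. *)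

theory Defs
  imports "HOL-Analysis.Analysis" "HOL-Computational_Algebra.Polynomial"
begin

text \<open>Dimension of the space of real homogeneous harmonic polynomials of degree k in n variables.\<close>
definition harm_dim :: "nat \<Rightarrow> nat \<Rightarrow> real" where
  "harm_dim n k = real ((n + k - 1) choose (n - 1)) - real ((n + k - 3) choose (n - 1))"

text \<open>Gegenbauer weight on [-1,1] for the sphere S^(n-1) in R^n.\<close>
definition geg_weight :: "nat \<Rightarrow> real \<Rightarrow> real" where
  "geg_weight n x = (1 - x\<^sup>2) powr ((real n - 3) / 2)"

definition Geg :: "nat \<Rightarrow> nat \<Rightarrow> real poly" where
  "Geg n k = (THE p. degree p = k \<and>
      (\<forall>q :: real poly. degree q < k \<longrightarrow>
         (LINT x:{-1..1}|lborel. geg_weight n x * poly p x * poly q x) = 0) \<and>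
      poly p 1 = harm_dim n k)"

definition geg_c :: "nat \<Rightarrow> nat \<Rightarrow> real" where
  "geg_c n k = - (INF x\<in>{-1..1::real}. poly (Geg n k) x)"

definition geg_b :: "nat \<Rightarrow> nat \<Rightarrow> real" where
  "geg_b n k = 1 + poly (Geg n k) 1 / geg_c n k"

end

theory Submission
  imports Defs "HOL-Probability.Probability"
begin

text \<open>The even Gegenbauer polynomial is explicit: \<open>Q\<^sub>n\<^sub>,\<^sub>2\<^sub>e\<close> is a multiple of
  \<open>\<Sum>\<^sub>i (-1)\<^sup>i (e choose i) (n/2+e-1)\<^sub>i / (1/2)\<^sub>i x\<^sup>2\<^sup>i\<close>. Its orthogonality reduces, via the
  moments \<open>(1/2)\<^sub>r / (n/2)\<^sub>r\<close> of the weight, to the vanishing of an \<open>e\<close>-th finite difference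
  of a polynomial of degree \<open>e - 1\<close>.
  Substituting \<open>x = t/\<surd>n\<close> and dividing the coefficient of \<open>t\<^sup>2\<^sup>i\<close> by \<open>n\<^sup>i\<close>, the polynomials converge
  coefficientwise to a multiple of the Hermite polynomial \<open>He\<^sub>2\<^sub>e\<close>. Having Gaussian mean zero, the
  latter takes negative values, and since the leading terms dominate for large \<open>|t|\<close> uniformly
  in \<open>n\<close>, the minimum over \<open>[-1,1]\<close> of the rescaled polynomial converges to the negative minimum
  of the limit. With the normalisation \<open>Q\<^sub>n\<^sub>,\<^sub>2\<^sub>e(1) \<sim> n\<^sup>2\<^sup>e/(2e)!\<close> this gives
  \<open>c\<^sub>n\<^sub>,\<^sub>2\<^sub>e \<sim> A n\<^sup>e\<close>, and then \<open>b\<^sub>n\<^sub>,\<^sub>2\<^sub>e = 1 + Q\<^sub>n\<^sub>,\<^sub>2\<^sub>e(1)/c\<^sub>n\<^sub>,\<^sub>2\<^sub>e \<sim> n\<^sup>e/((2e)! A)\<close>.\<close>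

section \<open>Moments of the Gegenbauer weight\<close>

lemma geg_weight_pos:
  assumes "-1 < x" "x < 1"
  shows "geg_weight n x > 0"
proof -
  have "x\<^sup>2 < 1" using assms by (simp add: abs_square_less_1 abs_less_iff)
  then show ?thesis unfolding geg_weight_def by simp
qed

text \<open>For \<open>n = 3\<close> the weight is not continuous, since \<open>0 powr 0 = 0\<close> in Isabelle.\<close>
lemma continuous_on_geg_weight:
  assumes "n \<ge> 4"
  shows "continuous_on {-1..1} (geg_weight n)"
  unfolding geg_weight_def
  by (intro continuous_on_powr' continuous_intros) (use assms in \<open>auto simp: abs_square_le_1\<close>)

lemma integrable_geg_weight_poly:
  assumes "n \<ge> 4"
  shows "(\<lambda>x. geg_weight n x * poly p x * poly q x) integrable_on {-1..1}"
  by (intro integrable_continuous_interval continuous_intros continuous_on_geg_weight assms)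

lemma set_integral_geg_weight_poly:
  assumes "n \<ge> 4"
  shows "(LINT x:{-1..1}|lborel. geg_weight n x * poly p x * poly q x) =
         integral {-1..1} (\<lambda>x. geg_weight n x * poly p x * poly q x)"
  by (intro set_borel_integral_eq_integral(2) borel_integrable_atLeastAtMost')
     (auto intro!: continuous_intros continuous_on_geg_weight assms)

definition geg_moment :: "nat \<Rightarrow> nat \<Rightarrow> real" where
  "geg_moment n m = integral {-1..1} (\<lambda>x. geg_weight n x * x ^ m)"

lemma geg_moment_has_integral:
  assumes "n \<ge> 4"
  shows "((\<lambda>x. geg_weight n x * x ^ m) has_integral geg_moment n m) {-1..1}"
  unfolding geg_moment_def
  by (intro integrable_integral integrable_continuous_interval continuous_intros
        continuous_on_geg_weight assms)

text \<open>Integrate the derivative of \<open>x\<^sup>j (1 - x\<^sup>2)\<^bsup>(n-1)/2\<^esup>\<close>, which vanishes at \<open>\<plusminus>1\<close>.\<close>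
lemma geg_moment_rec:
  assumes n: "n \<ge> 4"
  shows "real j * geg_moment n (j - 1) = (real j + real n - 1) * geg_moment n (j + 1)"
proof -
  define a where "a = (real n - 3) / 2"
  have a: "a > 0" using n by (simp add: a_def)
  define F where "F x = x ^ j * (1 - x\<^sup>2) powr (a + 1)" for x :: real
  define F' where "F' x = real j * (geg_weight n x * x ^ (j - 1))
                          - (real j + real n - 1) * (geg_weight n x * x ^ (j + 1))" for x :: real
  have deriv: "(F has_vector_derivative F' x) (at x)" if x: "x \<in> {-1<..<1}" for x
  proof -
    have pos: "1 - x\<^sup>2 > 0" using x by (simp add: abs_square_less_1 abs_less_iff)
    have "(F has_real_derivative (real j * x ^ (j - 1) * (1 - x\<^sup>2) powr (a + 1) +
             x ^ j * ((a + 1) * (1 - x\<^sup>2) powr a * (- 2 * x)))) (at x)"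
      unfolding F_def using pos by (auto intro!: derivative_eq_intros simp: powr_diff)
    moreover have "real j * x ^ (j - 1) * (1 - x\<^sup>2) powr (a + 1) +
             x ^ j * ((a + 1) * (1 - x\<^sup>2) powr a * (- 2 * x)) = F' x"
    proof -
      have powr_split: "(1 - x\<^sup>2) powr (a + 1) = (1 - x\<^sup>2) * (1 - x\<^sup>2) powr a"
        using pos by (simp add: powr_add)
      have shift: "real j * x ^ (j - 1) * x\<^sup>2 = real j * x ^ (j + 1)"
        by (cases j) (auto simp: power2_eq_square)
      have gw: "geg_weight n x = (1 - x\<^sup>2) powr a" by (simp add: geg_weight_def a_def)
      have exponent: "real j + 2 * a + 2 = real j + real n - 1" by (simp add: a_def field_simps)
      have "real j * x ^ (j - 1) * (1 - x\<^sup>2) powr (a + 1) +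
              x ^ j * ((a + 1) * (1 - x\<^sup>2) powr a * (- 2 * x))
            = (1 - x\<^sup>2) powr a * (real j * x ^ (j - 1) - real j * x ^ (j - 1) * x\<^sup>2
                - 2 * (a + 1) * x ^ (j + 1))"
        unfolding powr_split by (simp add: algebra_simps)
      also have "\<dots> = (1 - x\<^sup>2) powr a * (real j * x ^ (j - 1) - (real j + 2 * a + 2) * x ^ (j + 1))"
        unfolding shift by (simp add: algebra_simps)
      also have "\<dots> = F' x"
        unfolding F'_def gw exponent by (simp add: algebra_simps)
      finally show ?thesis .
    qed
    ultimately show ?thesis by (simp add: has_real_derivative_iff_has_vector_derivative)
  qed
  have cont: "continuous_on {-1..1} F"
    unfolding F_def
    by (intro continuous_intros continuous_on_powr') (use a in \<open>auto simp: abs_square_le_1\<close>)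
  have "(F' has_integral (F 1 - F (-1))) {-1..1}"
    by (rule fundamental_theorem_of_calculus_interior) (use deriv cont in auto)
  then have "(F' has_integral 0) {-1..1}" by (simp add: F_def)
  moreover have "(F' has_integral (real j * geg_moment n (j - 1)
                    - (real j + real n - 1) * geg_moment n (j + 1))) {-1..1}"
    unfolding F'_def by (intro has_integral_diff has_integral_mult_right geg_moment_has_integral n)
  ultimately show ?thesis by (metis has_integral_unique eq_iff_diff_eq_0)
qed

lemma geg_moment_odd:
  assumes n: "n \<ge> 4"
  shows "geg_moment n (2 * r + 1) = 0"
proof (induction r)
  case 0
  show ?case using geg_moment_rec[OF n, of 0] n by simp
next
  case (Suc r)
  have "real (2*r+2) * geg_moment n (2*r+1) = (real (2*r+2) + real n - 1) * geg_moment n (2*r+3)"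
    using geg_moment_rec[OF n, of "2*r+2"] by (simp add: numeral_3_eq_3)
  then show ?case using Suc n by (simp add: numeral_3_eq_3)
qed

lemma geg_moment_even:
  assumes n: "n \<ge> 4"
  shows "geg_moment n (2 * r) = geg_moment n 0 * pochhammer (1/2) r / pochhammer (real n / 2) r"
proof (induction r)
  case 0
  show ?case by simp
next
  case (Suc r)
  have pos: "real (2*r) + real n > 0" "pochhammer (real n / 2) r > 0"
    using n by (auto intro: pochhammer_pos)
  have "real (2*r+1) * geg_moment n (2*r) = (real (2*r) + real n) * geg_moment n (2 * Suc r)"
    using geg_moment_rec[OF n, of "2*r+1"] by simp
  then have "geg_moment n (2 * Suc r) = (1/2 + real r) / (real n / 2 + real r) * geg_moment n (2*r)"
    using pos by (simp add: field_simps)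
  also have "\<dots> = (1/2 + real r) / (real n / 2 + real r) *
      (geg_moment n 0 * pochhammer (1/2) r / pochhammer (real n / 2) r)"
    using Suc by simp
  also have "\<dots> = geg_moment n 0 * (pochhammer (1/2) r * (1/2 + real r)) /
      (pochhammer (real n / 2) r * (real n / 2 + real r))"
    by (simp add: field_simps)
  finally show ?case by (simp add: pochhammer_Suc)
qed

section \<open>Finite differences of polynomials\<close>

lemma alternating_choose_sum_Suc:
  fixes f :: "nat \<Rightarrow> real"
  shows "(\<Sum>j\<le>Suc e. (-1)^j * real (Suc e choose j) * f j) =
         (\<Sum>j\<le>e. (-1)^j * real (e choose j) * (f j - f (Suc j)))"
proof -
  have shift: "(\<Sum>j\<le>Suc e. (-1)^j * real (k choose j) * f j) =
        f 0 - (\<Sum>j\<le>e. (-1)^j * real (k choose Suc j) * f (Suc j))" for k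
    by (subst sum.atMost_Suc_shift) (simp add: sum_negf)
  have "(\<Sum>j\<le>e. (-1)^j * real (e choose j) * f j) = f 0 - (\<Sum>j\<le>e. (-1)^j * real (e choose Suc j) * f (Suc j))"
    using shift[of e] by (simp add: binomial_eq_0)
  then show ?thesis
    unfolding shift by (simp add: sum.distrib sum_subtractf algebra_simps)
qed

lemma degree_diff_pcompose_shift_less:
  fixes p :: "real poly"
  assumes "degree p > 0"
  shows "degree (p - p \<circ>\<^sub>p [:1, 1:]) < degree p"
proof -
  let ?q = "p \<circ>\<^sub>p [:1, 1:]"
  have deg: "degree ?q = degree p" by (simp add: degree_pcompose)
  have "lead_coeff ?q = lead_coeff p" by (subst lead_coeff_comp) auto
  then have "coeff (p - ?q) (degree p) = 0" using deg by simp
  moreover have "degree (p - ?q) \<le> degree p" using degree_diff_le[of p "degree p" ?q] deg by simp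
  ultimately show ?thesis using eq_zero_or_degree_less assms by fastforce
qed

lemma alternating_choose_sum_poly_eq_0:
  fixes p :: "real poly"
  assumes "degree p < e"
  shows "(\<Sum>j\<le>e. (-1)^j * real (e choose j) * poly p (real j)) = 0"
  using assms
proof (induction e arbitrary: p)
  case 0
  then show ?case by simp
next
  case (Suc e)
  let ?d = "p - p \<circ>\<^sub>p [:1, 1:]"
  have diff: "poly p (real j) - poly p (real (Suc j)) = poly ?d (real j)" for j
    by (simp add: poly_pcompose add.commute)
  have "(\<Sum>j\<le>Suc e. (-1)^j * real (Suc e choose j) * poly p (real j)) =
        (\<Sum>j\<le>e. (-1)^j * real (e choose j) * poly ?d (real j))"
    by (subst alternating_choose_sum_Suc, simp only: diff)
  also have "\<dots> = 0"
  proof (cases "degree p = 0")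
    case True
    then obtain c where "p = [:c:]" by (metis degree_eq_zeroE)
    then show ?thesis by simp
  next
    case False
    then have "degree ?d < e"
      using degree_diff_pcompose_shift_less[of p] Suc.prems by simp
    then show ?thesis by (rule Suc.IH)
  qed
  finally show ?case .
qed

section \<open>The even Gegenbauer polynomials in closed form\<close>

definition even_poly :: "nat \<Rightarrow> (nat \<Rightarrow> real) \<Rightarrow> real poly" where
  "even_poly e a = (\<Sum>i\<le>e. monom (a i) (2 * i))"

lemma poly_even_poly: "poly (even_poly e a) x = (\<Sum>i\<le>e. a i * x ^ (2 * i))"
  by (simp add: even_poly_def poly_sum poly_monom)

lemma coeff_even_poly:
  assumes "i \<le> e"
  shows "coeff (even_poly e a) (2 * i) = a i"
proof -
  have "coeff (even_poly e a) (2 * i) = (\<Sum>j\<le>e. if j = i then a j else 0)"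
    unfolding even_poly_def coeff_sum coeff_monom by (intro sum.cong) auto
  then show ?thesis using assms by simp
qed

lemma degree_even_poly:
  assumes "a e \<noteq> 0"
  shows "degree (even_poly e a) = 2 * e"
proof (rule antisym)
  show "degree (even_poly e a) \<le> 2 * e"
    unfolding even_poly_def
    by (rule degree_sum_le) (auto intro: order.trans[OF degree_monom_le])
  show "2 * e \<le> degree (even_poly e a)"
    using coeff_even_poly[of e e a] assms by (metis le_degree order_refl)
qed

definition geg_coeff :: "nat \<Rightarrow> nat \<Rightarrow> nat \<Rightarrow> real" where
  "geg_coeff e n i =
     (-1)^i * real (e choose i) * pochhammer (real n / 2 + real e - 1) i / pochhammer (1/2) i"

lemma geg_coeff_top_neq_0:
  assumes "n \<ge> 3"
  shows "geg_coeff e n e \<noteq> 0"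
proof -
  have "pochhammer (real n / 2 + real e - 1) e > 0"
    using assms by (intro pochhammer_pos) simp
  moreover have "pochhammer (1/2::real) e > 0" by (intro pochhammer_pos) simp
  ultimately show ?thesis by (simp add: geg_coeff_def)
qed

text \<open>After clearing denominators the summand is \<open>(-1)\<^sup>i (e choose i) Q(i)\<close> for the polynomial
  \<open>Q(x) = (1/2 + x)\<^sub>r (n/2 + r + x)\<^bsub>e-1-r\<^esub>\<close> of degree \<open>e - 1\<close>.\<close>
lemma geg_coeff_moment_sum_eq_0:
  assumes n: "n \<ge> 1" and r: "r < e"
  shows "(\<Sum>i\<le>e. geg_coeff e n i * (pochhammer (1/2) (i + r) / pochhammer (real n / 2) (i + r))) = 0"
proof -
  define b where "b = real n / 2"
  have b: "b > 0" using n by (simp add: b_def)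
  define Q where "Q = (\<Prod>l<r. [:1/2 + real l, 1:]) * (\<Prod>l<e-1-r. [:b + real r + real l, 1:])"
  have poly_lin: "poly (\<Prod>l<m. [:z + real l, 1:]) x = pochhammer (z + x) m" for z x m
    by (simp add: poly_prod pochhammer_prod atLeast0LessThan algebra_simps)
  have poly_Q: "poly Q x = pochhammer (1/2 + x) r * pochhammer (b + real r + x) (e-1-r)" for x
    unfolding Q_def poly_mult poly_lin by simp
  have "degree Q \<le> r + (e-1-r)"
    unfolding Q_def
    by (intro order.trans[OF degree_mult_le] add_mono order.trans[OF degree_prod_sum_le]) auto
  then have deg_Q: "degree Q < e" using r by linarith
  have summand: "geg_coeff e n i * (pochhammer (1/2) (i + r) / pochhammer b (i + r))
      = (-1)^i * real (e choose i) * poly Q (real i) / pochhammer b (e-1)" for i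
  proof -
    have half: "pochhammer (1/2::real) (i + r) = pochhammer (1/2) i * pochhammer (1/2 + real i) r"
      by (rule pochhammer_product')
    have pos: "pochhammer b (e-1) > 0" "pochhammer b (i+r) > 0" "pochhammer (1/2::real) i > 0"
      using b by (auto intro!: pochhammer_pos)
    have "pochhammer (b + real e - 1) i * pochhammer b (e-1) = pochhammer b ((e-1) + i)"
      using pochhammer_product'[of b "e-1" i] r by (simp add: of_nat_diff algebra_simps)
    also have "(e-1) + i = (i+r) + (e-1-r)" using r by simp
    also have "pochhammer b ((i+r) + (e-1-r)) = pochhammer b (i+r) * pochhammer (b + real r + real i) (e-1-r)"
      using pochhammer_product'[of b "i+r" "e-1-r"] by (simp add: algebra_simps)
    finally have "pochhammer (b + real e - 1) i * pochhammer b (e-1)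
        = pochhammer b (i+r) * pochhammer (b + real r + real i) (e-1-r)" .
    then show ?thesis
      unfolding geg_coeff_def poly_Q half b_def[symmetric] using pos by (simp add: field_simps)
  qed
  have "(\<Sum>i\<le>e. geg_coeff e n i * (pochhammer (1/2) (i + r) / pochhammer (real n / 2) (i + r)))
      = (\<Sum>i\<le>e. (-1)^i * real (e choose i) * poly Q (real i)) / pochhammer b (e-1)"
    unfolding b_def[symmetric] summand by (simp add: sum_divide_distrib)
  also have "\<dots> = 0" using alternating_choose_sum_poly_eq_0[OF deg_Q] by simp
  finally show ?thesis .
qed

abbreviation geg_even_poly :: "nat \<Rightarrow> nat \<Rightarrow> real poly" where
  "geg_even_poly e n \<equiv> even_poly e (geg_coeff e n)"

lemma integral_geg_even_poly_monom:
  assumes n: "n \<ge> 4" and i: "i < 2 * e"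
  shows "integral {-1..1} (\<lambda>x. geg_weight n x * poly (geg_even_poly e n) x * x ^ i) = 0"
proof -
  have "integral {-1..1} (\<lambda>x. geg_weight n x * poly (geg_even_poly e n) x * x ^ i)
      = integral {-1..1} (\<lambda>x. \<Sum>j\<le>e. geg_coeff e n j * (geg_weight n x * x ^ (2 * j + i)))"
    by (simp add: poly_even_poly sum_distrib_left sum_distrib_right power_add algebra_simps)
  also have "\<dots> = (\<Sum>j\<le>e. integral {-1..1} (\<lambda>x. geg_coeff e n j * (geg_weight n x * x ^ (2 * j + i))))"
    by (intro integral_sum)
       (auto intro!: integrable_continuous_interval continuous_intros continuous_on_geg_weight n)
  also have "\<dots> = (\<Sum>j\<le>e. geg_coeff e n j * geg_moment n (2 * j + i))"
    by (simp add: geg_moment_def)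
  also have "\<dots> = 0"
  proof (cases "even i")
    case True
    then obtain r where i_eq: "i = 2 * r" by auto
    have "(\<Sum>j\<le>e. geg_coeff e n j * geg_moment n (2 * j + i)) = geg_moment n 0 *
        (\<Sum>j\<le>e. geg_coeff e n j * (pochhammer (1/2) (j + r) / pochhammer (real n / 2) (j + r)))"
    proof -
      have "geg_moment n (2 * j + 2 * r) = geg_moment n 0 *
          (pochhammer (1/2) (j + r) / pochhammer (real n / 2) (j + r))" for j
        using geg_moment_even[OF n, of "j + r"] by (simp add: algebra_simps)
      then show ?thesis unfolding i_eq by (simp add: sum_distrib_left algebra_simps)
    qed
    also have "\<dots> = 0" using geg_coeff_moment_sum_eq_0[of n r e] n i i_eq by simp
    finally show ?thesis .
  next
    case False
    then obtain r where "i = 2 * r + 1" using oddE by blast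
    then have "geg_moment n (2 * j + i) = 0" for j
      using geg_moment_odd[OF n, of "j + r"] by (simp add: algebra_simps)
    then show ?thesis by simp
  qed
  finally show ?thesis .
qed

lemma integral_geg_even_poly_orthogonal:
  assumes n: "n \<ge> 4" and q: "degree q < 2 * e"
  shows "integral {-1..1} (\<lambda>x. geg_weight n x * poly (geg_even_poly e n) x * poly q x) = 0"
proof -
  have "integral {-1..1} (\<lambda>x. geg_weight n x * poly (geg_even_poly e n) x * poly q x)
      = integral {-1..1} (\<lambda>x. \<Sum>i\<le>degree q.
          coeff q i * (geg_weight n x * poly (geg_even_poly e n) x * x ^ i))"
  proof -
    have pq: "poly q x = (\<Sum>i\<le>degree q. coeff q i * x ^ i)" for x by (rule poly_altdef)
    show ?thesis by (simp add: pq sum_distrib_left algebra_simps)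
  qed
  also have "\<dots> = (\<Sum>i\<le>degree q.
      coeff q i * integral {-1..1} (\<lambda>x. geg_weight n x * poly (geg_even_poly e n) x * x ^ i))"
    by (subst integral_sum)
       (auto intro!: integrable_continuous_interval continuous_intros continuous_on_geg_weight n)
  also have "\<dots> = 0" using integral_geg_even_poly_monom[OF n] q by simp
  finally show ?thesis .
qed

lemma geg_weight_integral_square_eq_0:
  assumes n: "n \<ge> 4"
    and zero: "integral {-1..1} (\<lambda>x. geg_weight n x * poly r x * poly r x) = 0"
  shows "r = 0"
proof -
  have root: "poly r x = 0" if x: "x \<in> {-1<..<1}" for x
  proof -
    have "geg_weight n x * poly r x * poly r x = 0"
    proof (rule has_integral_0_cbox_imp_0[where f="\<lambda>x. geg_weight n x * poly r x * poly r x"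
          and a="-1" and b=1])
      show "continuous_on (cbox (-1) 1) (\<lambda>x. geg_weight n x * poly r x * poly r x)"
        by (auto simp: cbox_interval intro!: continuous_intros continuous_on_geg_weight n)
      show "0 \<le> geg_weight n y * poly r y * poly r y" if "y \<in> box (-1) 1" for y
        using that geg_weight_pos[of y n] by (simp add: box_real mult.assoc)
      show "((\<lambda>x. geg_weight n x * poly r x * poly r x) has_integral 0) (cbox (-1) 1)"
        using zero integrable_geg_weight_poly[OF n, of r r]
        by (metis cbox_interval has_integral_integral)
      show "box (-1) (1::real) \<noteq> {}" by (simp add: box_real)
      show "x \<in> cbox (-1) 1" using x by (simp add: cbox_interval)
    qed
    moreover have "geg_weight n x > 0" using x geg_weight_pos by auto
    ultimately show ?thesis by simp
  qed
  show "r = 0"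
  proof (rule ccontr)
    assume "r \<noteq> 0"
    then have "finite {x. poly r x = 0}" by (rule poly_roots_finite)
    moreover have "{-1<..<1::real} \<subseteq> {x. poly r x = 0}" using root by auto
    ultimately have "finite {-1<..<1::real}" by (rule finite_subset[rotated])
    then show False using infinite_Ioo[of "-1::real" 1] by simp
  qed
qed

definition is_geg :: "nat \<Rightarrow> nat \<Rightarrow> real poly \<Rightarrow> bool" where
  "is_geg n k p \<longleftrightarrow> degree p = k \<and>
      (\<forall>q :: real poly. degree q < k \<longrightarrow>
         (LINT x:{-1..1}|lborel. geg_weight n x * poly p x * poly q x) = 0) \<and>
      poly p 1 = harm_dim n k"

lemma Geg_eq_The_is_geg: "Geg n k = (THE p. is_geg n k p)"
  unfolding Geg_def is_geg_def ..

lemma is_geg_unique: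
  assumes n: "n \<ge> 4" and h: "harm_dim n k \<noteq> 0"
    and p1: "is_geg n k p1" and p2: "is_geg n k p2"
  shows "p1 = p2"
proof -
  have orth: "integral {-1..1} (\<lambda>x. geg_weight n x * poly p x * poly q x) = 0"
    if "is_geg n k p" "degree q < k" for p q
    using that set_integral_geg_weight_poly[OF n] by (simp add: is_geg_def)
  have deg: "degree p1 = k" "degree p2 = k" and val: "poly p1 1 = harm_dim n k" "poly p2 1 = harm_dim n k"
    using p1 p2 by (auto simp: is_geg_def)
  define l1 l2 where "l1 = lead_coeff p1" and "l2 = lead_coeff p2"
  have "l1 \<noteq> 0" using val h unfolding l1_def by auto
  define r where "r = smult l2 p1 - smult l1 p2"
  have "degree r \<le> k" "coeff r k = 0"
    unfolding r_def l1_def l2_def using deg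
    by (auto intro!: degree_diff_le order.trans[OF degree_smult_le])
  then consider "r = 0" | "degree r < k" using eq_zero_or_degree_less by blast
  then have "r = 0"
  proof cases
    case 2
    have "integral {-1..1} (\<lambda>x. geg_weight n x * poly r x * poly r x)
        = integral {-1..1} (\<lambda>x. l2 * (geg_weight n x * poly p1 x * poly r x) -
                                  l1 * (geg_weight n x * poly p2 x * poly r x))"
      unfolding r_def by (simp add: algebra_simps)
    also have "\<dots> = integral {-1..1} (\<lambda>x. l2 * (geg_weight n x * poly p1 x * poly r x)) -
                     integral {-1..1} (\<lambda>x. l1 * (geg_weight n x * poly p2 x * poly r x))"
      using integrable_on_cmult_left[OF integrable_geg_weight_poly[OF n, of p1 r], where c=l2]
        integrable_on_cmult_left[OF integrable_geg_weight_poly[OF n, of p2 r], where c=l1]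
      by (intro integral_diff) auto
    also have "\<dots> = 0" using orth[OF p1 2] orth[OF p2 2] by simp
    finally show ?thesis by (rule geg_weight_integral_square_eq_0[OF n])
  qed simp
  then have smult_eq: "smult l2 p1 = smult l1 p2" by (simp add: r_def)
  then have "l2 * harm_dim n k = l1 * harm_dim n k" using val by (metis poly_smult)
  then have "l1 = l2" using h by simp
  then show ?thesis using smult_eq \<open>l1 \<noteq> 0\<close> by (metis smult_cancel)
qed

lemma Geg_even_eq:
  assumes n: "n \<ge> 4" and h: "harm_dim n (2 * e) \<noteq> 0" and one: "poly (geg_even_poly e n) 1 \<noteq> 0"
  shows "Geg n (2 * e) = smult (harm_dim n (2 * e) / poly (geg_even_poly e n) 1) (geg_even_poly e n)"
    (is "_ = ?p")
  unfolding Geg_eq_The_is_geg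
proof (rule the_equality)
  show geg: "is_geg n (2 * e) ?p"
    unfolding is_geg_def
  proof (intro conjI allI impI)
    show "degree ?p = 2 * e"
      using h one degree_even_poly geg_coeff_top_neq_0 n by simp
    show "poly ?p 1 = harm_dim n (2 * e)" using one by simp
    fix q :: "real poly" assume q: "degree q < 2 * e"
    have "(LINT x:{-1..1}|lborel. geg_weight n x * poly ?p x * poly q x)
        = integral {-1..1} (\<lambda>x. harm_dim n (2 * e) / poly (geg_even_poly e n) 1 *
            (geg_weight n x * poly (geg_even_poly e n) x * poly q x))"
      unfolding set_integral_geg_weight_poly[OF n] by (simp add: algebra_simps)
    also have "\<dots> = 0" using integral_geg_even_poly_orthogonal[OF n q] by simp
    finally show "(LINT x:{-1..1}|lborel. geg_weight n x * poly ?p x * poly q x) = 0" .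
  qed
  show "p = ?p" if "is_geg n (2 * e) p" for p
    using is_geg_unique[OF n h that geg] .
qed

section \<open>The limiting Hermite polynomial\<close>

text \<open>\<open>\<Sum>i\<le>e. herm_coeff e i * t\<^sup>2\<^sup>i\<close> is \<open>(-1)\<^sup>e He\<^sub>2\<^sub>e(t) / (2e-1)!!\<close>, with \<open>He\<close> the probabilists'
  Hermite polynomial.\<close>
definition herm_coeff :: "nat \<Rightarrow> nat \<Rightarrow> real" where
  "herm_coeff e i = (-1)^i * real (e choose i) / (2^i * pochhammer (1/2) i)"

text \<open>The right-hand side is the \<open>2i\<close>-th moment of the standard normal distribution.\<close>
lemma two_power_pochhammer_half: "2^i * pochhammer (1/2::real) i = fact (2 * i) / (2^i * fact i)"
proof (induction i)
  case 0
  then show ?case by simp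
next
  case (Suc i)
  have "2^Suc i * pochhammer (1/2::real) (Suc i) = (2 * real i + 1) * (2^i * pochhammer (1/2) i)"
    by (simp add: pochhammer_Suc algebra_simps)
  also have "\<dots> = (2 * real i + 1) * (fact (2 * i) / (2^i * fact i))" using Suc by simp
  also have "\<dots> = fact (2 * Suc i) / (2^Suc i * fact (Suc i))"
    by (simp add: fact_Suc field_simps del: of_nat_Suc) (simp add: algebra_simps)
  finally show ?case .
qed

lemma has_bochner_integral_std_normal_herm:
  assumes "e \<ge> 1"
  shows "has_bochner_integral lborel
           (\<lambda>t. std_normal_density t * poly (even_poly e (herm_coeff e)) t) 0"
proof -
  have "has_bochner_integral lborel
          (\<lambda>t. \<Sum>i\<le>e. herm_coeff e i * (std_normal_density t * t ^ (2 * i)))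
          (\<Sum>i\<le>e. herm_coeff e i * (fact (2 * i) / (2^i * fact i)))"
    by (intro has_bochner_integral_sum has_bochner_integral_mult_right std_normal_moment_even)
  moreover have "herm_coeff e i * (fact (2 * i) / (2^i * fact i)) = (-1)^i * real (e choose i)" for i
  proof -
    have "pochhammer (1/2::real) i > 0" by (intro pochhammer_pos) auto
    then show ?thesis unfolding herm_coeff_def two_power_pochhammer_half[symmetric] by simp
  qed
  moreover have "(\<Sum>i\<le>e. (-1)^i * real (e choose i)) = 0"
    using assms by (intro choose_alternating_sum) simp
  ultimately show ?thesis
    by (simp add: poly_even_poly sum_distrib_left algebra_simps)
qed

lemma exists_poly_neg_if_std_normal_integral_eq_0:
  fixes p :: "real poly"
  assumes "p \<noteq> 0" and int: "has_bochner_integral lborel (\<lambda>t. std_normal_density t * poly p t) 0"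
  shows "\<exists>t. poly p t < 0"
proof (rule ccontr)
  assume "\<not> ?thesis"
  then have "AE t in lborel. 0 \<le> std_normal_density t * poly p t" by (simp add: not_less)
  then have "AE t in lborel. std_normal_density t * poly p t = 0"
    using int integral_nonneg_eq_0_iff_AE
    by (metis has_bochner_integral_integral_eq integrable.intros)
  then have "AE t in lborel. poly p t = 0" by (simp add: std_normal_density_def)
  moreover have "{t. poly p t = 0} \<in> null_sets lborel"
    using poly_roots_finite[OF \<open>p \<noteq> 0\<close>] by (rule finite_imp_null_set_lborel)
  then have "AE t in lborel. poly p t \<noteq> 0" using AE_not_in by fastforce
  ultimately have "AE t in (lborel :: real measure). False" by eventually_elim simp
  then have "ae_filter (lborel :: real measure) = bot" using trivial_limit_def by blast
  then show False by (simp add: ae_filter_eq_bot_iff)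
qed

lemma herm_sum_neg:
  assumes "e \<ge> 1"
  shows "\<exists>t. (\<Sum>i\<le>e. (-1)^e * herm_coeff e i * t ^ (2 * i)) < 0"
proof -
  let ?p = "smult ((-1)^e) (even_poly e (herm_coeff e))"
  have "coeff ?p 0 \<noteq> 0"
    using coeff_even_poly[of 0 e "herm_coeff e"] by (simp add: herm_coeff_def)
  then have "?p \<noteq> 0" by auto
  moreover have "has_bochner_integral lborel (\<lambda>t. std_normal_density t * poly ?p t) 0"
    using has_bochner_integral_mult_right[OF has_bochner_integral_std_normal_herm[OF assms], of "(-1)^e"]
    by (simp add: algebra_simps)
  ultimately obtain t where "poly ?p t < 0" using exists_poly_neg_if_std_normal_integral_eq_0 by blast
  then show ?thesis by (auto simp: poly_even_poly sum_distrib_left mult.assoc)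
qed

lemma herm_coeff_top_sign: "(-1)^e * herm_coeff e e > 0"
proof -
  have "pochhammer (1/2::real) e > 0" by (intro pochhammer_pos) simp
  moreover have "(-1::real)^e * (-1)^e = 1" by (simp flip: power_mult_distrib)
  ultimately show ?thesis by (simp add: herm_coeff_def mult.assoc[symmetric])
qed

section \<open>Asymptotics in the dimension\<close>

lemma tendsto_inverse_power: "(\<lambda>n. 1 / real n ^ k) \<longlonglongrightarrow> (0::real) ^ k"
  using tendsto_power[OF lim_const_over_n[of 1], of k] by (simp add: power_one_over)

lemma tendsto_pochhammer_over_power:
  fixes a c :: real
  shows "(\<lambda>n. pochhammer (real n * a + c) m / real n ^ m) \<longlonglongrightarrow> a ^ m"
proof -
  have eq: "(\<Prod>l<m. a + (c + real l) / real n) = pochhammer (real n * a + c) m / real n ^ m"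
    if "n > 0" for n
  proof -
    have "(\<Prod>l<m. a + (c + real l) / real n) = (\<Prod>l<m. (real n * a + c + real l) / real n)"
      using that by (intro prod.cong refl) (simp add: field_simps)
    also have "\<dots> = pochhammer (real n * a + c) m / real n ^ m"
      by (simp add: prod_dividef pochhammer_prod atLeast0LessThan)
    finally show ?thesis .
  qed
  have "(\<lambda>n. \<Prod>l<m. a + (c + real l) / real n) \<longlonglongrightarrow> (\<Prod>l<m. a + 0)"
    by (intro tendsto_prod tendsto_add tendsto_const lim_const_over_n)
  moreover have "\<forall>\<^sub>F n in sequentially.
      (\<Prod>l<m. a + (c + real l) / real n) = pochhammer (real n * a + c) m / real n ^ m"
    using eventually_gt_at_top[of 0] by eventually_elim (rule eq)
  ultimately show ?thesis by (simp add: Lim_transform_eventually)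
qed

lemma tendsto_geg_coeff: "(\<lambda>n. geg_coeff e n i / real n ^ i) \<longlonglongrightarrow> herm_coeff e i"
proof -
  let ?k = "(-1)^i * real (e choose i) / pochhammer (1/2) i"
  have "(\<lambda>n. ?k * (pochhammer (real n * (1/2) + (real e - 1)) i / real n ^ i)) \<longlonglongrightarrow> ?k * (1/2) ^ i"
    by (intro tendsto_mult tendsto_const tendsto_pochhammer_over_power)
  moreover have "?k * (1/2) ^ i = herm_coeff e i"
    by (simp add: herm_coeff_def power_one_over)
  ultimately show ?thesis by (simp add: geg_coeff_def algebra_simps)
qed

lemma tendsto_geg_even_poly_one:
  "(\<lambda>n. poly (geg_even_poly e n) 1 / real n ^ e) \<longlonglongrightarrow> herm_coeff e e"
proof -
  have "(\<lambda>n. \<Sum>i\<le>e. geg_coeff e n i / real n ^ i * (1 / real n ^ (e - i)))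
          \<longlonglongrightarrow> (\<Sum>i\<le>e. herm_coeff e i * 0 ^ (e - i))"
    by (intro tendsto_sum tendsto_mult tendsto_geg_coeff tendsto_inverse_power)
  moreover have "(\<Sum>i\<le>e. herm_coeff e i * (0::real) ^ (e - i)) = herm_coeff e e"
    by (subst sum.mono_neutral_right[of "{..e}" "{e}"]) auto
  moreover have "(\<Sum>i\<le>e. geg_coeff e n i / real n ^ i * (1 / real n ^ (e - i))) =
      poly (geg_even_poly e n) 1 / real n ^ e" for n
    unfolding poly_even_poly sum_divide_distrib
    by (intro sum.cong refl) (simp flip: power_add)
  ultimately show ?thesis by simp
qed

lemma harm_dim_eq_pochhammer:
  assumes "n \<ge> 1" "k \<ge> 2"
  shows "harm_dim n k = pochhammer (real n) k / fact k - pochhammer (real n) (k - 2) / fact (k - 2)"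
proof -
  have "n + k - 1 choose (n - 1) = n + k - 1 choose k"
    "n + k - 3 choose (n - 1) = n + k - 3 choose (k - 2)"
    using assms by (subst binomial_symmetric; auto)+
  moreover have "real (n + k - 1 choose k) = pochhammer (real n) k / fact k"
    "real (n + k - 3 choose (k - 2)) = pochhammer (real n) (k - 2) / fact (k - 2)"
    unfolding binomial_gbinomial gbinomial_pochhammer' using assms by (simp_all add: of_nat_diff)
  ultimately show ?thesis unfolding harm_dim_def by simp
qed

lemma tendsto_harm_dim:
  assumes "k \<ge> 2"
  shows "(\<lambda>n. harm_dim n k / real n ^ k) \<longlonglongrightarrow> 1 / fact k"
proof -
  define f where "f n = (pochhammer (real n * 1 + 0) k / real n ^ k) / fact k -
      (pochhammer (real n * 1 + 0) (k - 2) / real n ^ (k - 2)) * (1 / real n ^ 2) / fact (k - 2)"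
    for n
  have eq: "f n = harm_dim n k / real n ^ k" if "n \<ge> 1" for n
  proof -
    have "k - 2 + 2 = k" using assms by simp
    then have pow: "real n ^ k = real n ^ (k - 2) * real n ^ 2" by (metis power_add)
    show ?thesis
      unfolding f_def harm_dim_eq_pochhammer[OF that assms] pow using that by (simp add: field_simps)
  qed
  have "f \<longlonglongrightarrow> 1 ^ k / fact k - 1 ^ (k - 2) * 0 ^ 2 / fact (k - 2)"
    unfolding f_def
    by (intro tendsto_intros tendsto_pochhammer_over_power tendsto_inverse_power) auto
  moreover have "\<forall>\<^sub>F n in sequentially. f n = harm_dim n k / real n ^ k"
    using eventually_ge_at_top[of 1] by eventually_elim (rule eq)
  ultimately show ?thesis by (simp add: Lim_transform_eventually)
qed

section \<open>Infima of rescaled even polynomials\<close>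

lemma even_sum_nonneg_large:
  fixes a :: "nat \<Rightarrow> real"
  assumes e: "e \<ge> 1" and lead: "a e \<ge> g" and g: "g > 0" and bound: "\<forall>i<e. \<bar>a i\<bar> \<le> B"
    and t1: "t^2 \<ge> 1" and t2: "t^2 \<ge> real e * B / g"
  shows "0 \<le> (\<Sum>i\<le>e. a i * t ^ (2 * i))"
proof -
  define u where "u = t^2"
  have u: "u \<ge> 1" using t1 by (simp add: u_def)
  have "\<bar>a 0\<bar> \<le> B" using bound e by simp
  then have B: "B \<ge> 0" using abs_ge_zero[of "a 0"] by linarith
  have low: "a i * u^i \<ge> - (B * u^(e-1))" if i: "i < e" for i
  proof -
    have "\<bar>a i\<bar> * u^i \<le> B * u^(e-1)"
      using i u bound B by (intro mult_mono power_increasing) auto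
    moreover have "- \<bar>a i\<bar> * u^i \<le> a i * u^i"
      using mult_right_mono[of "- \<bar>a i\<bar>" "a i" "u^i"] u by simp
    ultimately show ?thesis by simp
  qed
  have "(\<Sum>i<e. a i * u^i) \<ge> - (real e * B * u^(e-1))"
    using sum_mono[of "{..<e}" "\<lambda>_. - (B * u^(e-1))" "\<lambda>i. a i * u^i"] low by simp
  moreover have "a e * u^e \<ge> real e * B * u^(e-1)"
  proof -
    have "real e * B \<le> g * u" using t2 g by (simp add: u_def field_simps)
    also have "g * u \<le> a e * u" using lead u by simp
    finally have "real e * B * u^(e-1) \<le> a e * u * u^(e-1)" using u by (intro mult_right_mono) auto
    also have "a e * u * u^(e-1) = a e * u^e" using e by (cases e) auto
    finally show ?thesis .
  qed
  moreover have "(\<Sum>i\<le>e. a i * t ^ (2 * i)) = (\<Sum>i<e. a i * u^i) + a e * u^e"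
    by (simp add: u_def power_mult lessThan_Suc_atMost[symmetric])
  ultimately show ?thesis by linarith
qed

lemma eventually_even_sums_nonneg_large:
  fixes a :: "nat \<Rightarrow> nat \<Rightarrow> real"
  assumes e: "e \<ge> 1" and lim: "\<And>i. (\<lambda>n. a n i) \<longlonglongrightarrow> b i" and lead: "b e > 0"
  obtains T where "\<And>t. T \<le> \<bar>t\<bar> \<Longrightarrow> 0 \<le> (\<Sum>i\<le>e. b i * t ^ (2 * i))"
    and "\<forall>\<^sub>F n in sequentially. \<forall>t. T \<le> \<bar>t\<bar> \<longrightarrow> 0 \<le> (\<Sum>i\<le>e. a n i * t ^ (2 * i))"
proof
  define B where "B = 1 + (\<Sum>i\<le>e. \<bar>b i\<bar>)"
  have B: "\<bar>b i\<bar> + 1 \<le> B" if "i \<le> e" for i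
    using that member_le_sum[of i "{..e}" "\<lambda>i. \<bar>b i\<bar>"] by (simp add: B_def)
  define g where "g = b e / 2"
  have g: "g > 0" using lead by (simp add: g_def)
  define T where "T = max 1 (sqrt (real e * B / g))"
  have large: "t^2 \<ge> 1 \<and> t^2 \<ge> real e * B / g" if "T \<le> \<bar>t\<bar>" for t
  proof -
    have "1 \<le> \<bar>t\<bar>" "sqrt (real e * B / g) \<le> \<bar>t\<bar>" using that by (auto simp: T_def)
    then show ?thesis
      by (metis abs_le_square_iff abs_one one_le_power power2_abs real_sqrt_le_iff
          real_sqrt_abs real_sqrt_pow2_iff real_sqrt_le_mono)
  qed
  have "\<bar>b i\<bar> \<le> B" if "i < e" for i
    using B[of i] that by simp
  then show "0 \<le> (\<Sum>i\<le>e. b i * t ^ (2 * i))" if "T \<le> \<bar>t\<bar>" for t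
    using large[OF that] g e by (intro even_sum_nonneg_large[where g=g and B=B]) (auto simp: g_def)
  have "\<forall>\<^sub>F n in sequentially. \<forall>i\<in>{..e}. \<bar>a n i - b i\<bar> < 1"
    using lim by (intro eventually_ball_finite) (auto simp: tendsto_iff dist_real_def)
  moreover have "\<forall>\<^sub>F n in sequentially. a n e > g"
    using lim[of e] lead by (intro order_tendstoD(1)) (auto simp: g_def)
  ultimately show "\<forall>\<^sub>F n in sequentially. \<forall>t. T \<le> \<bar>t\<bar> \<longrightarrow> 0 \<le> (\<Sum>i\<le>e. a n i * t ^ (2 * i))"
  proof eventually_elim
    case (elim n)
    have "\<bar>a n i\<bar> \<le> B" if "i < e" for i
    proof -
      have "\<bar>a n i - b i\<bar> < 1" "\<bar>b i\<bar> + 1 \<le> B" using elim(1) B[of i] that by auto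
      then show ?thesis by linarith
    qed
    then show ?case
      using large elim(2) g e by (auto intro!: even_sum_nonneg_large[where g=g and B=B])
  qed
qed

lemma tendsto_INF_rescaled:
  fixes F :: "nat \<Rightarrow> real \<Rightarrow> real"
  assumes \<delta>: "\<delta> \<longlonglongrightarrow> 0"
    and lower: "\<forall>\<^sub>F n in sequentially. \<forall>t. \<mu> - \<delta> n \<le> F n t"
    and upper: "\<forall>\<^sub>F n in sequentially. F n t0 \<le> \<mu> + \<delta> n"
    and r: "filterlim r at_top sequentially"
  shows "(\<lambda>n. INF x\<in>{-1..1}. F n (r n * x)) \<longlonglongrightarrow> \<mu>"
proof (rule tendsto_sandwich)
  show "(\<lambda>n. \<mu> - \<delta> n) \<longlonglongrightarrow> \<mu>" "(\<lambda>n. \<mu> + \<delta> n) \<longlonglongrightarrow> \<mu>"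
    using tendsto_diff[OF tendsto_const \<delta>] tendsto_add[OF tendsto_const \<delta>] by simp_all
  show "\<forall>\<^sub>F n in sequentially. \<mu> - \<delta> n \<le> (INF x\<in>{-1..1}. F n (r n * x))"
    using lower by eventually_elim (auto intro: cINF_greatest)
  have "\<forall>\<^sub>F n in sequentially. max 1 \<bar>t0\<bar> \<le> r n"
    using r unfolding filterlim_at_top by blast
  then show "\<forall>\<^sub>F n in sequentially. (INF x\<in>{-1..1}. F n (r n * x)) \<le> \<mu> + \<delta> n"
    using lower upper
  proof eventually_elim
    case (elim n)
    have "r n > 0" using elim(1) by simp
    then have "t0 / r n \<in> {-1..1}" and "r n * (t0 / r n) = t0"
      using elim(1) by (auto simp: divide_le_eq le_divide_eq abs_le_iff)
    moreover have "bdd_below ((\<lambda>x. F n (r n * x)) ` {-1..1})"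
      using elim(2) by (auto intro!: bdd_belowI2)
    ultimately have "(INF x\<in>{-1..1}. F n (r n * x)) \<le> F n t0"
      using cINF_lower[of "\<lambda>x. F n (r n * x)" "{-1..1}" "t0 / r n"] by simp
    then show ?case using elim(3) by simp
  qed
qed

lemma abs_even_sum_le:
  fixes c :: "nat \<Rightarrow> real"
  assumes "\<bar>t\<bar> \<le> T"
  shows "\<bar>\<Sum>i\<le>e. c i * t ^ (2 * i)\<bar> \<le> (\<Sum>i\<le>e. \<bar>c i\<bar> * T ^ (2 * i))"
proof -
  have "\<bar>\<Sum>i\<le>e. c i * t ^ (2 * i)\<bar> \<le> (\<Sum>i\<le>e. \<bar>c i * t ^ (2 * i)\<bar>)" by (rule sum_abs)
  also have "\<dots> \<le> (\<Sum>i\<le>e. \<bar>c i\<bar> * T ^ (2 * i))"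
  proof (intro sum_mono)
    fix i
    have "\<bar>t\<bar> ^ (2 * i) \<le> T ^ (2 * i)" using assms by (intro power_mono) auto
    then show "\<bar>c i * t ^ (2 * i)\<bar> \<le> \<bar>c i\<bar> * T ^ (2 * i)"
      by (simp add: abs_mult power_abs mult_left_mono)
  qed
  finally show ?thesis .
qed

lemma continuous_attains_neg_global_min:
  fixes G :: "real \<Rightarrow> real"
  assumes cont: "continuous_on UNIV G" and large: "\<And>t. T \<le> \<bar>t\<bar> \<Longrightarrow> 0 \<le> G t"
    and neg: "G t0 < 0"
  obtains tm where "G tm < 0" and "\<And>t. G tm \<le> G t"
proof -
  define T' where "T' = max T \<bar>t0\<bar>"
  have "continuous_on {-T'..T'} G" using cont by (rule continuous_on_subset) simp
  moreover have t0: "t0 \<in> {-T'..T'}" by (auto simp: T'_def abs_le_iff)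
  ultimately obtain tm where tm_min: "\<And>t. t \<in> {-T'..T'} \<Longrightarrow> G tm \<le> G t"
    using continuous_attains_inf[of "{-T'..T'}" G] by fastforce
  have "G tm < 0" using tm_min[OF t0] neg by simp
  moreover have "G tm \<le> G t" for t
  proof (cases "\<bar>t\<bar> \<le> T'")
    case True
    then show ?thesis using tm_min[of t] by (simp add: abs_le_iff)
  next
    case False
    then have "T \<le> \<bar>t\<bar>" by (simp add: T'_def)
    then show ?thesis using large[of t] \<open>G tm < 0\<close> by simp
  qed
  ultimately show ?thesis using that by blast
qed

text \<open>Outside a compact interval all the sums are nonnegative, while on it they converge uniformly
  to the limit sum; hence the rescaled infima converge to its (negative) minimum.\<close>
lemma tendsto_INF_rescaled_even_sums:
  fixes a :: "nat \<Rightarrow> nat \<Rightarrow> real"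
  assumes e: "e \<ge> 1" and lim: "\<And>i. (\<lambda>n. a n i) \<longlonglongrightarrow> b i" and lead: "b e > 0"
    and neg: "(\<Sum>i\<le>e. b i * t0 ^ (2 * i)) < 0" and r: "filterlim r at_top sequentially"
  shows "\<exists>\<mu><0. (\<lambda>n. INF x\<in>{-1..1}. \<Sum>i\<le>e. a n i * (r n * x) ^ (2 * i)) \<longlonglongrightarrow> \<mu>"
proof -
  define F where "F n t = (\<Sum>i\<le>e. a n i * t ^ (2 * i))" for n t
  define G where "G t = (\<Sum>i\<le>e. b i * t ^ (2 * i))" for t
  obtain T1 where G_large: "\<And>t. T1 \<le> \<bar>t\<bar> \<Longrightarrow> 0 \<le> G t"
    and F_large: "\<forall>\<^sub>F n in sequentially. \<forall>t. T1 \<le> \<bar>t\<bar> \<longrightarrow> 0 \<le> F n t"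
    using eventually_even_sums_nonneg_large[of e a b, OF e lim lead] unfolding F_def G_def by blast
  have "continuous_on UNIV G" unfolding G_def by (intro continuous_intros)
  then obtain tm where \<mu>: "G tm < 0" and G_ge: "\<And>t. G tm \<le> G t"
    using continuous_attains_neg_global_min[of G T1 t0] G_large neg unfolding G_def by blast
  define T where "T = max T1 \<bar>tm\<bar>"
  define \<delta> where "\<delta> n = (\<Sum>i\<le>e. \<bar>a n i - b i\<bar> * T ^ (2 * i))" for n
  have "(\<lambda>n. \<delta> n) \<longlonglongrightarrow> (\<Sum>i\<le>e. \<bar>b i - b i\<bar> * T ^ (2 * i))"
    unfolding \<delta>_def by (intro tendsto_intros lim)
  then have \<delta>: "\<delta> \<longlonglongrightarrow> 0" by simp
  have close: "\<bar>F n t - G t\<bar> \<le> \<delta> n" if "\<bar>t\<bar> \<le> T" for n t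
    using abs_even_sum_le[OF that, where c="\<lambda>i. a n i - b i" and e=e]
    by (simp add: F_def G_def \<delta>_def sum_subtractf algebra_simps)
  have lower: "\<forall>\<^sub>F n in sequentially. \<forall>t. G tm - \<delta> n \<le> F n t"
    using F_large
  proof eventually_elim
    case (elim n)
    have \<delta>_nonneg: "0 \<le> \<delta> n" unfolding \<delta>_def by (intro sum_nonneg) auto
    show ?case
    proof
      fix t
      show "G tm - \<delta> n \<le> F n t"
      proof (cases "\<bar>t\<bar> \<le> T")
        case True
        then show ?thesis using close[OF True, of n] G_ge[of t] by linarith
      next
        case False
        then have "T1 \<le> \<bar>t\<bar>" by (simp add: T_def)
        then show ?thesis using elim \<delta>_nonneg \<mu> by fastforce
      qed
    qed
  qed
  have "F n tm \<le> G tm + \<delta> n" for n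
    using close[of tm n] by (simp add: T_def abs_le_iff)
  then have upper: "\<forall>\<^sub>F n in sequentially. F n tm \<le> G tm + \<delta> n" by simp
  have "(\<lambda>n. INF x\<in>{-1..1}. F n (r n * x)) \<longlonglongrightarrow> G tm"
    by (rule tendsto_INF_rescaled[OF \<delta> lower upper r])
  then show ?thesis using \<mu> unfolding F_def by blast
qed

lemma INF_mult_left_nonneg:
  fixes f :: "'a \<Rightarrow> real"
  assumes c: "c \<ge> 0" and S: "S \<noteq> {}" and bdd: "bdd_below (f ` S)"
  shows "(INF x\<in>S. c * f x) = c * (INF x\<in>S. f x)"
proof (cases "c = 0")
  case True
  then show ?thesis using S by simp
next
  case False
  then have c: "c > 0" using c by simp
  obtain m where m: "\<And>x. x \<in> S \<Longrightarrow> m \<le> f x" using bdd by (auto simp: bdd_below_def)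
  have bdd': "bdd_below ((\<lambda>x. c * f x) ` S)"
    using m c by (intro bdd_belowI2[where m="c * m"]) auto
  show ?thesis
  proof (rule antisym)
    have "(INF x\<in>S. c * f x) / c \<le> (INF x\<in>S. f x)"
    proof (rule cINF_greatest[OF S])
      fix x assume "x \<in> S"
      then have "(INF x\<in>S. c * f x) \<le> c * f x" by (intro cINF_lower bdd')
      then show "(INF x\<in>S. c * f x) / c \<le> f x" using c by (simp add: divide_le_eq mult.commute)
    qed
    then show "(INF x\<in>S. c * f x) \<le> c * (INF x\<in>S. f x)" using c by (simp add: divide_le_eq mult.commute)
    show "c * (INF x\<in>S. f x) \<le> (INF x\<in>S. c * f x)"
      using c by (intro cINF_greatest[OF S] mult_left_mono cINF_lower bdd) auto
  qed
qed

section \<open>Asymptotics of the extremal values\<close>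

definition geg_scale :: "nat \<Rightarrow> nat \<Rightarrow> real" where
  "geg_scale e n = harm_dim n (2 * e) / ((-1)^e * poly (geg_even_poly e n) 1)"

lemma tendsto_geg_scale:
  assumes "e \<ge> 1"
  shows "(\<lambda>n. geg_scale e n / real n ^ e) \<longlonglongrightarrow> 1 / (fact (2 * e) * ((-1)^e * herm_coeff e e))"
proof -
  have eq: "(harm_dim n (2 * e) / real n ^ (2 * e)) / ((-1)^e * (poly (geg_even_poly e n) 1 / real n ^ e))
      = geg_scale e n / real n ^ e" if "n > 0" for n
  proof -
    have "real n ^ (2 * e) = real n ^ e * real n ^ e" by (simp flip: power_add mult_2)
    then show ?thesis using that by (simp add: geg_scale_def field_simps)
  qed
  have "(\<lambda>n. (harm_dim n (2 * e) / real n ^ (2 * e)) / ((-1)^e * (poly (geg_even_poly e n) 1 / real n ^ e)))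
      \<longlonglongrightarrow> (1 / fact (2 * e)) / ((-1)^e * herm_coeff e e)"
    using assms herm_coeff_top_sign[of e]
    by (intro tendsto_divide tendsto_mult tendsto_const tendsto_harm_dim tendsto_geg_even_poly_one) auto
  moreover have "\<forall>\<^sub>F n in sequentially. (harm_dim n (2 * e) / real n ^ (2 * e)) /
      ((-1)^e * (poly (geg_even_poly e n) 1 / real n ^ e)) = geg_scale e n / real n ^ e"
    using eventually_gt_at_top[of 0] by eventually_elim (rule eq)
  ultimately show ?thesis by (simp add: Lim_transform_eventually)
qed

lemma eventually_Geg_even_eq:
  assumes e: "e \<ge> 1"
  shows "\<forall>\<^sub>F n in sequentially. n \<ge> 4 \<and> geg_scale e n > 0 \<and>
           Geg n (2 * e) = smult (geg_scale e n * (-1)^e) (geg_even_poly e n)"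
proof -
  have "\<forall>\<^sub>F n in sequentially. 0 < harm_dim n (2 * e) / real n ^ (2 * e)"
    using e by (intro order_tendstoD(1)[OF tendsto_harm_dim]) auto
  moreover have "(\<lambda>n. (-1)^e * (poly (geg_even_poly e n) 1 / real n ^ e)) \<longlonglongrightarrow> (-1)^e * herm_coeff e e"
    by (intro tendsto_mult tendsto_const tendsto_geg_even_poly_one)
  then have "\<forall>\<^sub>F n in sequentially. 0 < (-1)^e * (poly (geg_even_poly e n) 1 / real n ^ e)"
    by (rule order_tendstoD(1)) (rule herm_coeff_top_sign)
  ultimately show ?thesis using eventually_ge_at_top[of 4]
  proof eventually_elim
    case (elim n)
    have "real n ^ (2 * e) > 0" "real n ^ e > 0" using elim(3) by auto
    then have h: "harm_dim n (2 * e) > 0" and p: "(-1)^e * poly (geg_even_poly e n) 1 > 0"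
      using elim(1,2) by (simp_all add: zero_less_divide_iff)
    have "(-1::real)^e * (-1)^e = 1" by (simp flip: power_mult_distrib)
    then have "harm_dim n (2 * e) / poly (geg_even_poly e n) 1 = geg_scale e n * (-1)^e"
      by (simp add: geg_scale_def field_simps)
    moreover have "geg_scale e n > 0" using h p by (simp add: geg_scale_def)
    moreover have "poly (geg_even_poly e n) 1 \<noteq> 0" using p by auto
    ultimately show ?case using elim(3) h Geg_even_eq[of n e] by auto
  qed
qed

lemma sign_geg_even_poly_rescaled:
  assumes "n > 0"
  shows "(-1)^e * poly (geg_even_poly e n) x =
         (\<Sum>i\<le>e. (-1)^e * geg_coeff e n i / real n ^ i * (sqrt (real n) * x) ^ (2 * i))"
  unfolding poly_even_poly sum_distrib_left
  using assms by (intro sum.cong refl) (simp add: power_mult_distrib power_mult)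

lemma tendsto_geg_c_even:
  assumes e: "e \<ge> 1"
  shows "\<exists>A>0. (\<lambda>n. geg_c n (2 * e) / real n ^ e) \<longlonglongrightarrow> A"
proof -
  define a where "a n i = (-1)^e * geg_coeff e n i / real n ^ i" for n i
  define I where "I n = (INF x\<in>{-1..1}. \<Sum>i\<le>e. a n i * (sqrt (real n) * x) ^ (2 * i))" for n
  have "(\<lambda>n. a n i) \<longlonglongrightarrow> (-1)^e * herm_coeff e i" for i
    unfolding a_def using tendsto_mult[OF tendsto_const tendsto_geg_coeff] by (simp add: mult.assoc)
  moreover obtain t0 where "(\<Sum>i\<le>e. (-1)^e * herm_coeff e i * t0 ^ (2 * i)) < 0"
    using herm_sum_neg[OF e] by blast
  moreover have "filterlim (\<lambda>n. sqrt (real n)) at_top sequentially"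
    by (rule filterlim_compose[OF sqrt_at_top filterlim_real_sequentially])
  ultimately obtain \<mu> where \<mu>: "\<mu> < 0" and I: "I \<longlonglongrightarrow> \<mu>"
    using tendsto_INF_rescaled_even_sums[OF e, of a "\<lambda>i. (-1)^e * herm_coeff e i" t0]
      herm_coeff_top_sign[of e] unfolding I_def by blast
  have "(\<lambda>n. - (geg_scale e n / real n ^ e) * I n)
      \<longlonglongrightarrow> - (1 / (fact (2 * e) * ((-1)^e * herm_coeff e e))) * \<mu>"
    by (intro tendsto_intros tendsto_geg_scale e I)
  moreover have "\<forall>\<^sub>F n in sequentially. - (geg_scale e n / real n ^ e) * I n = geg_c n (2 * e) / real n ^ e"
    using eventually_Geg_even_eq[OF e]
  proof eventually_elim
    case (elim n)
    have poly_eq: "poly (Geg n (2 * e)) x = geg_scale e n * (\<Sum>i\<le>e. a n i * (sqrt (real n) * x) ^ (2 * i))"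
      for x using elim sign_geg_even_poly_rescaled[of n e x] by (simp add: a_def)
    have "bdd_below ((\<lambda>x. \<Sum>i\<le>e. a n i * (sqrt (real n) * x) ^ (2 * i)) ` {-1..1})"
      by (intro bounded_imp_bdd_below compact_imp_bounded compact_continuous_image
          continuous_intros compact_Icc)
    then have "geg_c n (2 * e) = - geg_scale e n * I n"
      unfolding geg_c_def poly_eq I_def using elim by (subst INF_mult_left_nonneg) auto
    then show ?case by simp
  qed
  ultimately have "(\<lambda>n. geg_c n (2 * e) / real n ^ e)
      \<longlonglongrightarrow> - (1 / (fact (2 * e) * ((-1)^e * herm_coeff e e))) * \<mu>"
    by (rule Lim_transform_eventually)
  moreover have "- (1 / (fact (2 * e) * ((-1)^e * herm_coeff e e))) * \<mu> > 0"
    using \<mu> herm_coeff_top_sign[of e] by (simp add: divide_neg_pos)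
  ultimately show ?thesis by blast
qed

lemma tendsto_geg_b_even:
  assumes e: "e \<ge> 1" and c: "(\<lambda>n. geg_c n (2 * e) / real n ^ e) \<longlonglongrightarrow> A" and A: "A > 0"
  shows "(\<lambda>n. geg_b n (2 * e) / real n ^ e) \<longlonglongrightarrow> 1 / (fact (2 * e) * A)"
proof -
  have "(\<lambda>n. 1 / real n ^ e + (harm_dim n (2 * e) / real n ^ (2 * e)) / (geg_c n (2 * e) / real n ^ e))
      \<longlonglongrightarrow> 0 ^ e + (1 / fact (2 * e)) / A"
    using e A by (intro tendsto_intros tendsto_inverse_power tendsto_harm_dim c) auto
  moreover have "\<forall>\<^sub>F n in sequentially.
      1 / real n ^ e + (harm_dim n (2 * e) / real n ^ (2 * e)) / (geg_c n (2 * e) / real n ^ e)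
      = geg_b n (2 * e) / real n ^ e"
    using eventually_Geg_even_eq[OF e] eventually_gt_at_top[of 0]
  proof eventually_elim
    case (elim n)
    then have "poly (Geg n (2 * e)) 1 = harm_dim n (2 * e)"
      by (auto simp: geg_scale_def zero_less_divide_iff)
    moreover have "real n ^ e \<noteq> 0" "real n ^ (2 * e) = real n ^ e * real n ^ e"
      using elim by (simp_all flip: power_add mult_2)
    ultimately show ?case
      unfolding geg_b_def by (cases "geg_c n (2 * e) = 0") (simp_all add: field_simps)
  qed
  ultimately have "(\<lambda>n. geg_b n (2 * e) / real n ^ e) \<longlonglongrightarrow> 0 ^ e + (1 / fact (2 * e)) / A"
    by (rule Lim_transform_eventually)
  moreover have "(0::real) ^ e = 0" using e by simp
  ultimately show ?thesis by simp
qed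

theorem theorem5p1:
  fixes e :: nat
  assumes "e \<ge> 2"
  shows "\<exists>A B :: real. A > 0 \<and> B > 0 \<and>
           ((\<lambda>n. geg_c n (2 * e) / real n ^ e) \<longlonglongrightarrow> A) \<and>
           ((\<lambda>n. geg_b n (2 * e) / real n ^ e) \<longlonglongrightarrow> B)"
proof -
  have e: "e \<ge> 1" using assms by simp
  obtain A where "A > 0" and "(\<lambda>n. geg_c n (2 * e) / real n ^ e) \<longlonglongrightarrow> A"
    using tendsto_geg_c_even[OF e] by blast
  moreover from this have "(\<lambda>n. geg_b n (2 * e) / real n ^ e) \<longlonglongrightarrow> 1 / (fact (2 * e) * A)"
    by (intro tendsto_geg_b_even e)
  moreover have "1 / (fact (2 * e) * A) > 0" using \<open>A > 0\<close> by simp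
  ultimately show ?thesis by blast
qed

end
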